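(* Let $\|\!|\cdot|\!\|$ be any norm on $\ell^1$ equivalent to the usual norm, and let $Y=(\ell^1,\|\!|\cdot|\!\|)$ with closed unit ball $B_Y$. Let $(e_n)_{n\ge1}$ be the canonical basis of $\ell^1$, let $\tau$ be the weak$^\ast$ topology $\sigma(\ell^1,c_0)$, and let $$E=\left\{\tfrac{n}{n+1}\,\tfrac{e_n}{\|\!|e_n|\!\|}: n\in\mathbb{N}\right\}\cup\{0\},\qquad K=\overline{\mathrm{co}}^{\,\tau}(E).$$ Then $K=\overline{\mathrm{co}}(E)$ (norm closure), $K\subseteq B_Y$, $\sup\{\|\!|k|\!\|: k\in K\}=1$, and there is no $k\in K$ with $\|\!|k|\!\|=1$; in particular $K$ is a closed bounded convex subset of $Y$ that is not remotal from $0$.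
   Context: $\overline{\mathrm{co}}^{\,\tau}(E)$ denotes the $\tau$-closed convex hull and $\overline{\mathrm{co}}(E)$ the norm-closed convex hull. A set $C$ is remotal from $z$ if there exists $c_0\in C$ with $\|z-c_0\|=\sup\{\|z-c\|:c\in C\}$. *)

theory Defs
  imports "HOL-Analysis.Analysis"
begin

text \<open>Sequences are functions nat => real; coordinate k (k >= 0) of the sequence
corresponds to coordinate k+1 in the paper's indexing.\<close>

definition l1 :: "(nat \<Rightarrow> real) set" where
  "l1 = {x. summable (\<lambda>n. \<bar>x n\<bar>)}"

definition l1norm :: "(nat \<Rightarrow> real) \<Rightarrow> real" where
  "l1norm x = (\<Sum>n. \<bar>x n\<bar>)"

definition c0 :: "(nat \<Rightarrow> real) set" where
  "c0 = {y. y \<longlonglongrightarrow> 0}"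

definition vadd :: "(nat \<Rightarrow> real) \<Rightarrow> (nat \<Rightarrow> real) \<Rightarrow> (nat \<Rightarrow> real)" where
  "vadd x y = (\<lambda>n. x n + y n)"

definition vsub :: "(nat \<Rightarrow> real) \<Rightarrow> (nat \<Rightarrow> real) \<Rightarrow> (nat \<Rightarrow> real)" where
  "vsub x y = (\<lambda>n. x n - y n)"

definition vscale :: "real \<Rightarrow> (nat \<Rightarrow> real) \<Rightarrow> (nat \<Rightarrow> real)" where
  "vscale c x = (\<lambda>n. c * x n)"

definition ebasis :: "nat \<Rightarrow> (nat \<Rightarrow> real)" where
  "ebasis k = (\<lambda>n. if n = k then 1 else 0)"

definition equiv_l1_norm :: "((nat \<Rightarrow> real) \<Rightarrow> real) \<Rightarrow> bool" where
  "equiv_l1_norm N \<longleftrightarrow>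
     (\<forall>x\<in>l1. N x = 0 \<longleftrightarrow> x = (\<lambda>_. 0)) \<and>
     (\<forall>x\<in>l1. \<forall>c. N (vscale c x) = \<bar>c\<bar> * N x) \<and>
     (\<forall>x\<in>l1. \<forall>y\<in>l1. N (vadd x y) \<le> N x + N y) \<and>
     (\<exists>a b. 0 < a \<and> 0 < b \<and> (\<forall>x\<in>l1. a * l1norm x \<le> N x \<and> N x \<le> b * l1norm x))"

definition conv_set :: "(nat \<Rightarrow> real) set \<Rightarrow> bool" where
  "conv_set S \<longleftrightarrow> (\<forall>x\<in>S. \<forall>y\<in>S. \<forall>t::real. 0 \<le> t \<and> t \<le> 1 \<longrightarrow>
                       vadd (vscale (1 - t) x) (vscale t y) \<in> S)"

definition pair :: "(nat \<Rightarrow> real) \<Rightarrow> (nat \<Rightarrow> real) \<Rightarrow> real" where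
  "pair x y = (\<Sum>n. x n * y n)"

definition wstar_closed :: "(nat \<Rightarrow> real) set \<Rightarrow> bool" where
  "wstar_closed S \<longleftrightarrow> S \<subseteq> l1 \<and>
     (\<forall>x\<in>l1. (\<forall>F \<epsilon>. finite F \<and> F \<subseteq> c0 \<and> 0 < \<epsilon> \<longrightarrow>
                  (\<exists>s\<in>S. \<forall>y\<in>F. \<bar>pair (vsub s x) y\<bar> < \<epsilon>)) \<longrightarrow> x \<in> S)"

definition norm_closed :: "((nat \<Rightarrow> real) \<Rightarrow> real) \<Rightarrow> (nat \<Rightarrow> real) set \<Rightarrow> bool" where
  "norm_closed N S \<longleftrightarrow> S \<subseteq> l1 \<and>
     (\<forall>x\<in>l1. (\<forall>\<epsilon>>0. \<exists>s\<in>S. N (vsub s x) < \<epsilon>) \<longrightarrow> x \<in> S)"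

definition wstar_closed_hull :: "(nat \<Rightarrow> real) set \<Rightarrow> (nat \<Rightarrow> real) set" where
  "wstar_closed_hull E = \<Inter>{C. E \<subseteq> C \<and> conv_set C \<and> wstar_closed C}"

definition norm_closed_hull :: "((nat \<Rightarrow> real) \<Rightarrow> real) \<Rightarrow> (nat \<Rightarrow> real) set \<Rightarrow> (nat \<Rightarrow> real) set" where
  "norm_closed_hull N E = \<Inter>{C. E \<subseteq> C \<and> conv_set C \<and> norm_closed N C}"

definition remotal :: "((nat \<Rightarrow> real) \<Rightarrow> real) \<Rightarrow> (nat \<Rightarrow> real) set \<Rightarrow> (nat \<Rightarrow> real) \<Rightarrow> bool" where
  "remotal N C z \<longleftrightarrow> (\<exists>c0\<in>C. N (vsub z c0) = (SUP c\<in>C. N (vsub z c)))"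

end

theory Submission
  imports Defs
begin

(* Write t_k = (k+1)/(k+2) for the shrinking factors and w_k = N(e_k)/t_k, so that the
   points of E other than 0 are the "vertices" e_k/w_k.  The whole argument rests on the
   weighted simplex
       S_w = {x in l1. x >= 0 and sum_{k<m} x_k w_k <= 1 for every m}.
   (1) For arbitrary positive weights, S_w is convex and weak*-closed, and every truncation
       of an element of S_w lies in every convex set containing 0 and all vertices.
   (2) For a norm N equivalent to the l1 norm, truncations converge in N, and weak*-closed
       sets are N-closed; hence S_w is the least N-closed and the least weak*-closed convex
       set containing E, i.e. both closed convex hulls of E equal S_w.
   (3) N(x) <= sum_k |x_k| N(e_k) on l1; for x in S_w with w_k = N(e_k)/t_k this gives
       N(x) <= sum_k x_k w_k t_k < sum_k x_k w_k <= 1 whenever x is nonzero.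
   (4) Since N(e_k/w_k) = t_k tends to 1, the supremum of N over S_w is 1, and it is not
       attained; this is exactly the failure of remotality from 0.
   The main theorem is assembled from these facts at the end of the file. *)

lemma l1_summable_abs: "x \<in> l1 \<Longrightarrow> summable (\<lambda>n. \<bar>x n\<bar>)"
  by (simp add: l1_def)

lemma l1I: "summable (\<lambda>n. \<bar>x n\<bar>) \<Longrightarrow> x \<in> l1"
  by (simp add: l1_def)

lemma vadd_l1: "x \<in> l1 \<Longrightarrow> y \<in> l1 \<Longrightarrow> vadd x y \<in> l1"
  unfolding vadd_def
  by (rule l1I, rule summable_comparison_test[of _ "\<lambda>n. \<bar>x n\<bar> + \<bar>y n\<bar>"])
     (auto intro!: summable_add l1_summable_abs)

lemma vsub_l1: "x \<in> l1 \<Longrightarrow> y \<in> l1 \<Longrightarrow> vsub x y \<in> l1"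
  unfolding vsub_def
  by (rule l1I, rule summable_comparison_test[of _ "\<lambda>n. \<bar>x n\<bar> + \<bar>y n\<bar>"])
     (auto intro!: summable_add l1_summable_abs)

lemma vscale_l1: "x \<in> l1 \<Longrightarrow> vscale c x \<in> l1"
  unfolding vscale_def
  by (rule l1I) (use summable_mult[OF l1_summable_abs, of x "\<bar>c\<bar>"] in \<open>simp add: abs_mult\<close>)

lemma finite_support_l1: "(\<And>n. n \<ge> m \<Longrightarrow> x n = 0) \<Longrightarrow> x \<in> l1"
  by (rule l1I, rule summable_finite[of "{..<m}"]) (auto simp: not_less)

lemma finite_support_c0: "(\<And>n. n \<ge> m \<Longrightarrow> y n = 0) \<Longrightarrow> y \<in> c0"
  unfolding c0_def by (auto intro!: tendsto_eventually eventually_sequentiallyI[of m])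

lemma ebasis_l1: "ebasis k \<in> l1"
  by (rule finite_support_l1[of "Suc k"]) (auto simp: ebasis_def)

lemma l1norm_ebasis: "l1norm (ebasis k) = 1"
  unfolding l1norm_def by (subst suminf_finite[of "{k}"]) (auto simp: ebasis_def)

lemma zero_l1: "(\<lambda>_. 0::real) \<in> l1"
  by (rule finite_support_l1[of 0]) auto

lemma l1_times_bounded_summable:
  assumes "x \<in> l1" "\<And>n. \<bar>y n\<bar> \<le> B"
  shows "summable (\<lambda>n. \<bar>x n * y n\<bar>)"
proof (rule summable_comparison_test[OF _ summable_mult[OF l1_summable_abs[OF assms(1)], of B]])
  show "\<exists>N. \<forall>n\<ge>N. norm \<bar>x n * y n\<bar> \<le> B * \<bar>x n\<bar>"
    using mult_left_mono[OF assms(2), of "\<bar>x _\<bar>"] by (auto simp: abs_mult mult.commute)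
qed

lemma pair_bound:
  assumes "x \<in> l1" "\<And>n. \<bar>y n\<bar> \<le> B"
  shows "\<bar>pair x y\<bar> \<le> B * l1norm x"
proof -
  have le: "\<bar>x n * y n\<bar> \<le> B * \<bar>x n\<bar>" for n
    using mult_left_mono[OF assms(2)[of n], of "\<bar>x n\<bar>"] by (simp add: abs_mult mult.commute)
  have s: "summable (\<lambda>n. \<bar>x n * y n\<bar>)" by (rule l1_times_bounded_summable[OF assms])
  have "\<bar>pair x y\<bar> \<le> (\<Sum>n. \<bar>x n * y n\<bar>)" unfolding pair_def by (rule summable_rabs[OF s])
  also have "\<dots> \<le> (\<Sum>n. B * \<bar>x n\<bar>)"
    by (rule suminf_le[OF le s summable_mult[OF l1_summable_abs[OF assms(1)]]])
  also have "\<dots> = B * l1norm x"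
    unfolding l1norm_def by (rule suminf_mult[OF l1_summable_abs[OF assms(1)]])
  finally show ?thesis .
qed

lemma pair_finite_support:
  assumes "\<And>n. n \<ge> m \<Longrightarrow> y n = 0"
  shows "pair x y = (\<Sum>n<m. x n * y n)"
  unfolding pair_def by (rule suminf_finite) (use assms in \<open>auto simp: not_less\<close>)

definition trunc :: "nat \<Rightarrow> (nat \<Rightarrow> real) \<Rightarrow> (nat \<Rightarrow> real)" where
  "trunc m x = (\<lambda>n. if n < m then x n else 0)"

lemma trunc_l1: "trunc m x \<in> l1"
  by (rule finite_support_l1[of m]) (auto simp: trunc_def)

lemma trunc_Suc: "trunc (Suc m) x = vadd (trunc m x) (vscale (x m) (ebasis m))"
  by (rule ext) (auto simp: trunc_def vadd_def vscale_def ebasis_def less_Suc_eq)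

lemma l1_tail_small:
  assumes "x \<in> l1" "0 < e"
  shows "\<exists>m. l1norm (vsub (trunc m x) x) < e"
proof -
  obtain m where m: "norm (\<Sum>i. \<bar>x (i + m)\<bar>) < e"
    using suminf_exist_split[OF assms(2) l1_summable_abs[OF assms(1)]] by blast
  define g where "g n = (if n < m then 0 else \<bar>x n\<bar>)" for n
  have "summable g"
    by (rule summable_comparison_test[OF _ l1_summable_abs[OF assms(1)]]) (auto simp: g_def)
  hence "suminf g = (\<Sum>i. g (i + m)) + (\<Sum>i<m. g i)"
    by (rule suminf_split_initial_segment)
  also have "\<dots> = (\<Sum>i. \<bar>x (i + m)\<bar>)" by (simp add: g_def)
  finally have "suminf g = (\<Sum>i. \<bar>x (i + m)\<bar>)" .
  moreover have "l1norm (vsub (trunc m x) x) = suminf g"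
    unfolding l1norm_def g_def vsub_def trunc_def by (rule arg_cong[where f=suminf]) auto
  ultimately have "l1norm (vsub (trunc m x) x) < e" using m by (simp add: abs_less_iff)
  thus ?thesis by blast
qed

section \<open>Norms equivalent to the l1 norm\<close>

locale l1_equiv_norm =
  fixes N :: "(nat \<Rightarrow> real) \<Rightarrow> real" and lo hi :: real
  assumes N_eq_0: "x \<in> l1 \<Longrightarrow> N x = 0 \<longleftrightarrow> x = (\<lambda>_. 0)"
    and N_vscale: "x \<in> l1 \<Longrightarrow> N (vscale c x) = \<bar>c\<bar> * N x"
    and N_triangle: "x \<in> l1 \<Longrightarrow> y \<in> l1 \<Longrightarrow> N (vadd x y) \<le> N x + N y"
    and lo_pos: "0 < lo" and hi_pos: "0 < hi"
    and N_lower: "x \<in> l1 \<Longrightarrow> lo * l1norm x \<le> N x"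
    and N_upper: "x \<in> l1 \<Longrightarrow> N x \<le> hi * l1norm x"

lemma equiv_l1_norm_locale:
  assumes "equiv_l1_norm N"
  obtains lo hi where "l1_equiv_norm N lo hi"
  using assms unfolding equiv_l1_norm_def l1_equiv_norm_def by blast

context l1_equiv_norm
begin

lemma N_zero: "N (\<lambda>_. 0) = 0"
  using N_eq_0[OF zero_l1] by simp

lemma N_vsub_commute: "x \<in> l1 \<Longrightarrow> y \<in> l1 \<Longrightarrow> N (vsub x y) = N (vsub y x)"
  using N_vscale[OF vsub_l1, of y x "-1"] by (simp add: vsub_def vscale_def)

lemma N_ebasis_pos: "0 < N (ebasis k)"
  using N_lower[OF ebasis_l1, of k] lo_pos by (simp add: l1norm_ebasis)

lemma N_ebasis_le: "N (ebasis k) \<le> hi"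
  using N_upper[OF ebasis_l1, of k] by (simp add: l1norm_ebasis)

lemma trunc_approx:
  assumes "x \<in> l1" "0 < e"
  shows "\<exists>m. N (vsub (trunc m x) x) < e"
proof -
  obtain m where m: "l1norm (vsub (trunc m x) x) < e / hi"
    using l1_tail_small[OF assms(1) divide_pos_pos[OF assms(2) hi_pos]] by blast
  have "N (vsub (trunc m x) x) \<le> hi * l1norm (vsub (trunc m x) x)"
    by (rule N_upper[OF vsub_l1[OF trunc_l1 assms(1)]])
  also have "\<dots> < e" using m hi_pos by (simp add: field_simps)
  finally show ?thesis by blast
qed

text \<open>Basic weak* neighbourhoods contain N-balls, so weak*-closed sets are N-closed.\<close>

lemma wstar_closed_imp_norm_closed:
  assumes C: "wstar_closed C"
  shows "norm_closed N C"
  unfolding norm_closed_def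
proof (intro conjI ballI impI)
  show Cl1: "C \<subseteq> l1" using C by (simp add: wstar_closed_def)
  fix x assume x: "x \<in> l1" and approx: "\<forall>e>0. \<exists>s\<in>C. N (vsub s x) < e"
  have "\<exists>s\<in>C. \<forall>y\<in>F. \<bar>pair (vsub s x) y\<bar> < e" if F: "finite F" "F \<subseteq> c0" and e: "0 < e" for F e
  proof -
    have "\<exists>B. \<forall>n. \<bar>y n\<bar> \<le> B" if "y \<in> F" for y
    proof -
      have "Bseq y" using that F(2) unfolding c0_def by (auto intro: convergent_imp_Bseq convergentI)
      thus ?thesis unfolding Bseq_def by auto
    qed
    then obtain Bf where Bf: "\<And>y n. y \<in> F \<Longrightarrow> \<bar>y n\<bar> \<le> Bf y" by metis
    define B where "B = 1 + (\<Sum>y\<in>F. \<bar>Bf y\<bar>)"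
    have B_pos: "0 < B" by (simp add: B_def add_pos_nonneg sum_nonneg)
    have B_bound: "\<bar>y n\<bar> \<le> B" if "y \<in> F" for y n
    proof -
      have "\<bar>Bf y\<bar> \<le> (\<Sum>y\<in>F. \<bar>Bf y\<bar>)" using F(1) that by (intro member_le_sum) auto
      thus ?thesis using Bf[OF that, of n] by (simp add: B_def)
    qed
    obtain s where s: "s \<in> C" "N (vsub s x) < lo * e / B"
      using approx lo_pos e B_pos by (meson divide_pos_pos mult_pos_pos)
    have sx: "vsub s x \<in> l1" using s(1) Cl1 x by (blast intro: vsub_l1)
    have "lo * l1norm (vsub s x) < lo * (e / B)" using N_lower[OF sx] s(2) by simp
    hence small: "B * l1norm (vsub s x) < e" using lo_pos B_pos by (simp add: field_simps)
    show ?thesis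
      using pair_bound[OF sx B_bound] small s(1) by (meson le_less_trans)
  qed
  thus "x \<in> C" using C x unfolding wstar_closed_def by blast
qed

lemma N_trunc_le: "N (trunc m x) \<le> (\<Sum>k<m. \<bar>x k\<bar> * N (ebasis k))"
proof (induction m)
  case 0
  show ?case by (simp add: trunc_def N_zero)
next
  case (Suc m)
  have "N (trunc (Suc m) x) \<le> N (trunc m x) + N (vscale (x m) (ebasis m))"
    unfolding trunc_Suc by (rule N_triangle[OF trunc_l1 vscale_l1[OF ebasis_l1]])
  also have "N (vscale (x m) (ebasis m)) = \<bar>x m\<bar> * N (ebasis m)"
    by (rule N_vscale[OF ebasis_l1])
  finally show ?case using Suc.IH by simp
qed

lemma weighted_l1_summable: "x \<in> l1 \<Longrightarrow> summable (\<lambda>k. \<bar>x k\<bar> * N (ebasis k))"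
  using l1_times_bounded_summable[of x "\<lambda>k. N (ebasis k)" hi] N_ebasis_le N_ebasis_pos
  by (simp add: abs_mult less_imp_le)

lemma N_le_weighted_l1:
  assumes x: "x \<in> l1"
  shows "N x \<le> (\<Sum>k. \<bar>x k\<bar> * N (ebasis k))" (is "_ \<le> ?Q")
proof (rule field_le_epsilon)
  fix e :: real assume "0 < e"
  then obtain m where m: "N (vsub (trunc m x) x) < e" using trunc_approx[OF x] by blast
  have "x = vadd (trunc m x) (vsub x (trunc m x))" by (auto simp: vadd_def vsub_def)
  hence "N x \<le> N (trunc m x) + N (vsub x (trunc m x))"
    using N_triangle[OF trunc_l1 vsub_l1[OF x trunc_l1]] by metis
  also have "N (vsub x (trunc m x)) < e"
    using m N_vsub_commute[OF x trunc_l1] by simp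
  also have "N (trunc m x) \<le> ?Q"
  proof -
    have "(\<Sum>k<m. \<bar>x k\<bar> * N (ebasis k)) \<le> ?Q"
      by (rule sum_le_suminf[OF weighted_l1_summable[OF x]])
         (auto intro: mult_nonneg_nonneg less_imp_le[OF N_ebasis_pos])
    thus ?thesis using N_trunc_le[of m x] by linarith
  qed
  finally show "N x \<le> ?Q + e" by simp
qed

end

section \<open>The weighted simplex\<close>

text \<open>For positive weights w, the simplex with vertices 0 and e_k / w_k.\<close>

definition wsimplex :: "(nat \<Rightarrow> real) \<Rightarrow> (nat \<Rightarrow> real) set" where
  "wsimplex w = {x \<in> l1. (\<forall>k. 0 \<le> x k) \<and> (\<forall>m. (\<Sum>k<m. x k * w k) \<le> 1)}"

definition vertex :: "(nat \<Rightarrow> real) \<Rightarrow> nat \<Rightarrow> (nat \<Rightarrow> real)" where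
  "vertex w k = vscale (1 / w k) (ebasis k)"

lemma wsimplex_l1: "wsimplex w \<subseteq> l1"
  by (auto simp: wsimplex_def)

lemma zero_in_wsimplex: "(\<lambda>_. 0) \<in> wsimplex w"
  by (simp add: wsimplex_def zero_l1)

lemma vertex_in_wsimplex:
  assumes "0 < w k"
  shows "vertex w k \<in> wsimplex w"
proof -
  have "(\<Sum>j<m. vertex w k j * w j) = (\<Sum>j<m. if j = k then 1 else 0)" for m
    using assms by (intro sum.cong) (auto simp: vertex_def vscale_def ebasis_def)
  moreover have "vertex w k \<in> l1" unfolding vertex_def by (rule vscale_l1[OF ebasis_l1])
  ultimately show ?thesis
    using assms by (auto simp: wsimplex_def vertex_def vscale_def ebasis_def)
qed

lemma wsimplex_convex: "conv_set (wsimplex w)"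
  unfolding conv_set_def
proof (intro ballI allI impI)
  fix x y and t :: real assume x: "x \<in> wsimplex w" and y: "y \<in> wsimplex w" and t: "0 \<le> t \<and> t \<le> 1"
  let ?z = "vadd (vscale (1 - t) x) (vscale t y)"
  have "(\<Sum>k<m. ?z k * w k) \<le> 1" for m
  proof -
    have "(\<Sum>k<m. ?z k * w k) = (\<Sum>k<m. (1 - t) * (x k * w k) + t * (y k * w k))"
      by (rule sum.cong) (auto simp: vadd_def vscale_def algebra_simps)
    also have "\<dots> = (1 - t) * (\<Sum>k<m. x k * w k) + t * (\<Sum>k<m. y k * w k)"
      by (simp add: sum.distrib sum_distrib_left)
    also have "\<dots> \<le> (1 - t) * 1 + t * 1"
      using x y t by (intro add_mono mult_left_mono) (auto simp: wsimplex_def)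
    finally show ?thesis by simp
  qed
  moreover have "?z \<in> l1" using x y by (auto simp: wsimplex_def intro!: vadd_l1 vscale_l1)
  ultimately show "?z \<in> wsimplex w"
    using x y t by (auto simp: wsimplex_def vadd_def vscale_def)
qed

text \<open>Both defining conditions are tested against finitely supported elements of c0
  (a basis vector, resp. the truncated weight sequence), hence survive weak* limits.\<close>

lemma wsimplex_wstar_closed: "wstar_closed (wsimplex w)"
  unfolding wstar_closed_def
proof (intro conjI ballI impI)
  show "wsimplex w \<subseteq> l1" by (rule wsimplex_l1)
  fix x assume x: "x \<in> l1"
    and near: "\<forall>F e. finite F \<and> F \<subseteq> c0 \<and> 0 < e \<longrightarrow>
                 (\<exists>s\<in>wsimplex w. \<forall>y\<in>F. \<bar>pair (vsub s x) y\<bar> < e)"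
  have nonneg: "0 \<le> x k" for k
  proof (rule ccontr)
    assume neg: "\<not> 0 \<le> x k"
    have "ebasis k \<in> c0" by (rule finite_support_c0[of "Suc k"]) (auto simp: ebasis_def)
    then obtain s where s: "s \<in> wsimplex w" "\<bar>pair (vsub s x) (ebasis k)\<bar> < - x k"
      using near[rule_format, of "{ebasis k}" "- x k"] neg by auto
    have "pair (vsub s x) (ebasis k) = s k - x k"
      by (subst pair_finite_support[of "Suc k"]) (auto simp: ebasis_def vsub_def)
    moreover have "0 \<le> s k" using s(1) by (auto simp: wsimplex_def)
    ultimately show False using s(2) by linarith
  qed
  have partial: "(\<Sum>k<m. x k * w k) \<le> 1" for m
  proof (rule ccontr)
    assume big: "\<not> (\<Sum>k<m. x k * w k) \<le> 1"
    define y where "y n = (if n < m then w n else 0)" for n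
    have "y \<in> c0" by (rule finite_support_c0[of m]) (auto simp: y_def)
    then obtain s where s: "s \<in> wsimplex w" "\<bar>pair (vsub s x) y\<bar> < (\<Sum>k<m. x k * w k) - 1"
      using near[rule_format, of "{y}" "(\<Sum>k<m. x k * w k) - 1"] big by auto
    have "pair (vsub s x) y = (\<Sum>k<m. s k * w k) - (\<Sum>k<m. x k * w k)"
      by (subst pair_finite_support[of m]) (auto simp: y_def vsub_def sum_subtractf left_diff_distrib)
    moreover have "(\<Sum>k<m. s k * w k) \<le> 1" using s(1) by (auto simp: wsimplex_def)
    ultimately show False using s(2) by linarith
  qed
  show "x \<in> wsimplex w" using x nonneg partial by (simp add: wsimplex_def)
qed

text \<open>Every truncation of an element of the simplex is a finite convex combination of 0 and
  vertices: split off the last coordinate and rescale the rest (induction on m).\<close>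

lemma trunc_in_convex:
  assumes w: "\<And>k. 0 < w k" and C: "conv_set C" "(\<lambda>_. 0) \<in> C" "\<And>k. vertex w k \<in> C"
  shows "(\<forall>k. 0 \<le> x k) \<Longrightarrow> (\<Sum>k<m. x k * w k) \<le> 1 \<Longrightarrow> trunc m x \<in> C"
proof (induction m arbitrary: x)
  case 0
  have "trunc 0 x = (\<lambda>_. 0)" by (simp add: trunc_def)
  thus ?case using C(2) by simp
next
  case (Suc m)
  define l where "l = x m * w m"
  have terms_nonneg: "0 \<le> x k * w k" for k using Suc.prems(1) w[of k] by simp
  have rest_nonneg: "0 \<le> (\<Sum>k<m. x k * w k)" using terms_nonneg by (simp add: sum_nonneg)
  have rest_le: "(\<Sum>k<m. x k * w k) \<le> 1 - l" using Suc.prems(2) by (simp add: l_def)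
  have l_nonneg: "0 \<le> l" using terms_nonneg by (simp add: l_def)
  show ?case
  proof (cases "l < 1")
    case False
    have "(\<Sum>k<m. x k * w k) = 0" using False rest_nonneg rest_le by linarith
    hence "x k = 0" if "k < m" for k
      using sum_nonneg_eq_0_iff[of "{..<m}" "\<lambda>k. x k * w k"] terms_nonneg that w[of k] by auto
    moreover have "x m = 1 / w m" using False rest_nonneg rest_le w[of m] by (simp add: l_def field_simps)
    ultimately have "trunc (Suc m) x = vertex w m"
      by (auto simp: trunc_def vertex_def vscale_def ebasis_def less_Suc_eq)
    thus ?thesis using C(3) by simp
  next
    case True
    define z where "z = vscale (1 / (1 - l)) x"
    have "(\<Sum>k<m. z k * w k) = (\<Sum>k<m. x k * w k) / (1 - l)"
      by (simp add: z_def vscale_def sum_divide_distrib)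
    also have "\<dots> \<le> 1" using rest_le True by simp
    finally have "trunc m z \<in> C" using Suc.IH Suc.prems(1) True by (simp add: z_def vscale_def)
    hence "vadd (vscale (1 - l) (trunc m z)) (vscale l (vertex w m)) \<in> C"
      using C(1) C(3)[of m] l_nonneg True unfolding conv_set_def by auto
    moreover have "vadd (vscale (1 - l) (trunc m z)) (vscale l (vertex w m)) = trunc (Suc m) x"
      using True w[of m]
      by (auto simp: vadd_def vscale_def trunc_def z_def vertex_def ebasis_def l_def less_Suc_eq)
    ultimately show ?thesis by simp
  qed
qed

section \<open>The simplex is both closed convex hull of its vertices\<close>

context l1_equiv_norm
begin

lemma wsimplex_least:
  assumes w: "\<And>k. 0 < w k"
    and C: "insert (\<lambda>_. 0) (range (vertex w)) \<subseteq> C" "conv_set C" "norm_closed N C"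
  shows "wsimplex w \<subseteq> C"
proof
  fix x assume x: "x \<in> wsimplex w"
  have xl: "x \<in> l1" using x wsimplex_l1 by blast
  have "\<exists>s\<in>C. N (vsub s x) < e" if "0 < e" for e
  proof -
    obtain m where "N (vsub (trunc m x) x) < e" using trunc_approx[OF xl \<open>0 < e\<close>] by blast
    moreover have "trunc m x \<in> C"
      using trunc_in_convex[of w C x m, OF w C(2)] C(1) x by (auto simp: wsimplex_def)
    ultimately show ?thesis by blast
  qed
  thus "x \<in> C" using C(3) xl unfolding norm_closed_def by blast
qed

lemma hulls_eq_wsimplex:
  assumes w: "\<And>k. 0 < w k"
  defines "V \<equiv> insert (\<lambda>_. 0) (range (vertex w))"
  shows "wstar_closed_hull V = wsimplex w" and "norm_closed_hull N V = wsimplex w"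
proof -
  have V: "V \<subseteq> wsimplex w" using zero_in_wsimplex vertex_in_wsimplex w by (auto simp: V_def)
  show "wstar_closed_hull V = wsimplex w"
    unfolding wstar_closed_hull_def
  proof (rule antisym)
    show "\<Inter> {C. V \<subseteq> C \<and> conv_set C \<and> wstar_closed C} \<subseteq> wsimplex w"
      using V wsimplex_convex wsimplex_wstar_closed by (intro Inter_lower) simp
    show "wsimplex w \<subseteq> \<Inter> {C. V \<subseteq> C \<and> conv_set C \<and> wstar_closed C}"
      using wsimplex_least[of w, OF w] wstar_closed_imp_norm_closed by (auto simp: V_def)
  qed
  show "norm_closed_hull N V = wsimplex w"
    unfolding norm_closed_hull_def
  proof (rule antisym)
    show "\<Inter> {C. V \<subseteq> C \<and> conv_set C \<and> norm_closed N C} \<subseteq> wsimplex w"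
      using V wsimplex_convex wstar_closed_imp_norm_closed[OF wsimplex_wstar_closed]
      by (intro Inter_lower) simp
    show "wsimplex w \<subseteq> \<Inter> {C. V \<subseteq> C \<and> conv_set C \<and> norm_closed N C}"
      using wsimplex_least[of w, OF w] by (auto simp: V_def)
  qed
qed

end

section \<open>The specific weights: N is strictly below 1 on the simplex\<close>

definition shrink :: "nat \<Rightarrow> real" where
  "shrink k = real (Suc k) / real (Suc k + 1)"

lemma shrink_pos: "0 < shrink k" and shrink_less_1: "shrink k < 1"
  and shrink_ge_half: "1 / 2 \<le> shrink k"
  by (simp_all add: shrink_def field_simps)

lemma shrink_tendsto_1: "shrink \<longlonglongrightarrow> 1"
proof -
  have "shrink = (\<lambda>n. real (Suc n) / real (Suc (Suc n)))"
    unfolding shrink_def by (simp del: of_nat_Suc)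
  thus ?thesis using LIMSEQ_Suc[OF LIMSEQ_n_over_Suc_n[where 'a=real]] by (simp only:)
qed

lemma SUP_eq_1_by_shrink:
  fixes f :: "'a \<Rightarrow> real"
  assumes le: "\<And>k. k \<in> K \<Longrightarrow> f k \<le> 1" and hit: "\<And>n. \<exists>k\<in>K. f k = shrink n"
  shows "(SUP k\<in>K. f k) = 1"
proof (rule antisym)
  have ne: "K \<noteq> {}" using hit by blast
  show "(SUP k\<in>K. f k) \<le> 1" by (rule cSUP_least[OF ne le])
  have "shrink n \<le> (SUP k\<in>K. f k)" for n
    using hit[of n] cSUP_upper[of _ K f] le by (metis bdd_aboveI2)
  thus "1 \<le> (SUP k\<in>K. f k)"
    using LIMSEQ_le_const2[OF shrink_tendsto_1] by blast
qed

context l1_equiv_norm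
begin

text \<open>The weights w_k = N(e_k)/t_k, chosen so that N(e_k / w_k) = t_k.\<close>

definition weight :: "nat \<Rightarrow> real" where
  "weight k = N (ebasis k) / shrink k"

lemma weight_pos: "0 < weight k"
  using N_ebasis_pos shrink_pos by (simp add: weight_def)

lemma weight_le: "weight k \<le> 2 * hi"
proof -
  have "N (ebasis k) / shrink k \<le> hi / (1 / 2)"
    using N_ebasis_le N_ebasis_pos shrink_pos shrink_ge_half hi_pos by (intro frac_le) auto
  thus ?thesis by (simp add: weight_def)
qed

lemma N_vertex: "N (vertex weight k) = shrink k"
  using N_vscale[OF ebasis_l1, of "1 / weight k" k] N_ebasis_pos[of k] shrink_pos[of k]
  by (simp add: vertex_def weight_def)

lemma N_less_1_on_wsimplex:
  assumes x: "x \<in> wsimplex weight"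
  shows "N x < 1"
proof (cases "x = (\<lambda>_. 0)")
  case True
  thus ?thesis by (simp add: N_zero)
next
  case False
  have xl: "x \<in> l1" and nonneg: "\<And>k. 0 \<le> x k" and partial: "\<And>m. (\<Sum>k<m. x k * weight k) \<le> 1"
    using x by (auto simp: wsimplex_def)
  obtain j where "x j \<noteq> 0" using False by auto
  hence xj: "0 < x j" using nonneg[of j] by simp
  have "summable (\<lambda>k. \<bar>x k * weight k\<bar>)"
    by (rule l1_times_bounded_summable[OF xl, of weight "2 * hi"])
       (use weight_le weight_pos in \<open>simp add: less_imp_le\<close>)
  hence sW: "summable (\<lambda>k. x k * weight k)" by (rule summable_rabs_cancel)
  have sN: "summable (\<lambda>k. x k * N (ebasis k))"
    using weighted_l1_summable[OF xl] nonneg by simp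
  define gap where "gap k = x k * weight k - x k * N (ebasis k)" for k
  have gap_eq: "gap k = x k * weight k * (1 - shrink k)" for k
    using N_ebasis_pos[of k] shrink_pos[of k] by (simp add: gap_def weight_def field_simps)
  have "0 < suminf gap"
  proof (rule suminf_pos2)
    show "summable gap" unfolding gap_def by (rule summable_diff[OF sW sN])
    show "0 \<le> gap k" for k
      using nonneg[of k] weight_pos[of k] shrink_less_1[of k] by (simp add: gap_eq)
    show "0 < gap j" using xj weight_pos[of j] shrink_less_1[of j] by (simp add: gap_eq)
  qed
  moreover have "suminf gap = (\<Sum>k. x k * weight k) - (\<Sum>k. x k * N (ebasis k))"
    unfolding gap_def by (rule suminf_diff[OF sW sN, symmetric])
  moreover have "(\<Sum>k. x k * weight k) \<le> 1" by (rule suminf_le_const[OF sW partial])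
  moreover have "N x \<le> (\<Sum>k. x k * N (ebasis k))" using N_le_weighted_l1[OF xl] nonneg by simp
  ultimately show ?thesis by linarith
qed

lemma E_eq_vertices:
  "{vscale (real n / real (n + 1) / N (ebasis (n - 1))) (ebasis (n - 1)) | n. n \<ge> 1}
     \<union> {(\<lambda>_. 0)} = insert (\<lambda>_. 0) (range (vertex weight))"
proof -
  have point: "vscale (real n / real (n + 1) / N (ebasis (n - 1))) (ebasis (n - 1)) = vertex weight (n - 1)"
    if "n \<ge> 1" for n
    using that by (cases n) (simp_all add: vertex_def weight_def shrink_def mult.commute)
  have "{vscale (real n / real (n + 1) / N (ebasis (n - 1))) (ebasis (n - 1)) | n. n \<ge> 1}
          = (\<lambda>n. vertex weight (n - 1)) ` {n. n \<ge> 1}"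
    using point by auto (metis point)
  also have "{n::nat. n \<ge> 1} = range Suc"
    by (auto simp: image_iff) (metis Suc_pred' less_eq_Suc_le)
  finally show ?thesis by (simp add: image_image)
qed

lemma remotal_zero_iff:
  assumes "K \<subseteq> l1"
  shows "remotal N K (\<lambda>_. 0) \<longleftrightarrow> (\<exists>c\<in>K. N c = (SUP k\<in>K. N k))"
proof -
  have neg: "N (vsub (\<lambda>_. 0) c) = N c" if "c \<in> K" for c
    using N_vsub_commute[of c "\<lambda>_. 0"] assms that zero_l1 by (auto simp: vsub_def)
  hence "(SUP c\<in>K. N (vsub (\<lambda>_. 0) c)) = (SUP k\<in>K. N k)" by (intro SUP_cong) auto
  thus ?thesis using neg unfolding remotal_def by auto
qed

end

theorem mainTheorem7:
  fixes N :: "(nat \<Rightarrow> real) \<Rightarrow> real"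
    and E K :: "(nat \<Rightarrow> real) set"
  assumes "equiv_l1_norm N"
    and "E = {vscale (real n / real (n + 1) / N (ebasis (n - 1))) (ebasis (n - 1)) | n. n \<ge> 1}
             \<union> {(\<lambda>_. 0)}"
    and "K = wstar_closed_hull E"
  shows "K = norm_closed_hull N E
       \<and> K \<subseteq> {x\<in>l1. N x \<le> 1}
       \<and> (SUP k\<in>K. N k) = 1
       \<and> \<not> (\<exists>k\<in>K. N k = 1)
       \<and> norm_closed N K \<and> (\<exists>M. \<forall>k\<in>K. N k \<le> M) \<and> conv_set K
       \<and> \<not> remotal N K (\<lambda>_. 0)"
proof -
  obtain lo hi where "l1_equiv_norm N lo hi" using assms(1) by (rule equiv_l1_norm_locale)
  then interpret l1_equiv_norm N lo hi .
  have E: "E = insert (\<lambda>_. 0) (range (vertex weight))" using assms(2) E_eq_vertices by simp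
  have K: "K = wsimplex weight" and hull: "norm_closed_hull N E = wsimplex weight"
    using hulls_eq_wsimplex[of weight, OF weight_pos] assms(3) E by simp_all
  have below_1: "\<And>k. k \<in> K \<Longrightarrow> N k < 1" using N_less_1_on_wsimplex K by simp
  have vertices: "vertex weight n \<in> K" for n using vertex_in_wsimplex[of weight, OF weight_pos] K by simp
  have sup: "(SUP k\<in>K. N k) = 1"
    using below_1 N_vertex vertices by (intro SUP_eq_1_by_shrink) (auto intro: less_imp_le)
  have "\<not> remotal N K (\<lambda>_. 0)"
    using remotal_zero_iff[of K] wsimplex_l1 K sup below_1 by fastforce
  moreover have "norm_closed N K"
    using K wstar_closed_imp_norm_closed[OF wsimplex_wstar_closed] by simp
  ultimately show ?thesis
    using hull K sup below_1 wsimplex_l1 wsimplex_convex by (fastforce intro: less_imp_le)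
qed

end
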